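(* Let $X$ be a real Hilbert space and $A,B$ closed convex nonempty subsets of $X$ such that $E$ and $F$ are nonempty and bounded. Let $\{A_n\}$, $\{B_n\}$ be sequences of closed convex nonempty subsets of $X$ with $A_n\to A$ and $B_n\to B$ in the Attouch–Wets sense. Suppose the couple $(A,B)$ is regular, and let $\delta,\epsilon>0$. For each $n\in\mathbb N$ let $a_n,x_n\in A_n$ and $b_n,y_n\in B_n$ be such that $\mathrm{dist}(x_n,E)\to0$ and $\mathrm{dist}(y_n,F)\to0$. Then there exists $n_2\in\mathbb N$ such that for every $n\ge n_2$: (i) if $\mathrm{dist}(a_n,E)\ge 2\epsilon$, $\mathrm{dist}(b_n,F)\ge2\epsilon$ and $a_n=P_{A_n}b_n$, then $\cos\bigl(x_n-a_n,\,b_n-(a_n+v)\bigr)\le\delta$; (ii) if $\mathrm{dist}(a_n,E)\ge 2\epsilon$, $\mathrm{dist}(b_{n+1},F)\ge2\epsilon$ and $b_{n+1}=P_{B_{n+1}}a_n$, then $\cos\bigl(y_{n+1}-b_{n+1},\,a_n+v-b_{n+1}\bigr)\le\delta$.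
   Context: $P_C$ denotes the metric projection onto a closed convex nonempty set $C$; $B_X$ is the closed unit ball; $\mathrm{dist}(x,S)=\inf_{s\in S}\|x-s\|$, $\mathrm{dist}(S,T)=\inf_{s\in S}\mathrm{dist}(s,T)$. $E=\{a\in A:\mathrm{dist}(a,B)=\mathrm{dist}(A,B)\}$, $F=\{b\in B:\mathrm{dist}(b,A)=\mathrm{dist}(A,B)\}$, $v=P_{\overline{B-A}}(0)$. For nonzero $u,w$, $\cos(u,w)=\langle u,w\rangle/(\|u\|\|w\|)$. Attouch–Wets convergence: for nonempty closed $C,D$ and $N\in\mathbb N$ let $e_N(C,D)=\sup_{c\in C\cap NB_X}\mathrm{dist}(c,D)$ ($0$ if $C\cap NB_X=\emptyset$) and $h_N(C,D)=\max\{e_N(C,D),e_N(D,C)\}$; $C_j\to C$ if $\lim_j h_N(C_j,C)=0$ for every $N$. The couple $(A,B)$ (with $E,F\ne\emptyset$) is regular if for each $\epsilon>0$ there is $\delta>0$ such that $\mathrm{dist}(x,E)\le\epsilon$ whenever $\max\{\mathrm{dist}(x,A),\mathrm{dist}(x,B-v)\}\le\delta$. *)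

theory Defs
  imports "HOL-Analysis.Analysis"
begin

text \<open>Metric projection onto C (the unique nearest point; well defined for closed convex
nonempty C in a real Hilbert space).\<close>
definition metric_proj :: "'a::real_inner set \<Rightarrow> 'a \<Rightarrow> 'a" where
  "metric_proj C x = (THE y. y \<in> C \<and> (\<forall>c\<in>C. norm (x - y) \<le> norm (x - c)))"

definition minkowski_diff :: "'a::real_vector set \<Rightarrow> 'a set \<Rightarrow> 'a set" where
  "minkowski_diff B A = {b - a | a b. a \<in> A \<and> b \<in> B}"

definition best_A :: "'a::real_normed_vector set \<Rightarrow> 'a set \<Rightarrow> 'a set" where
  "best_A A B = {a \<in> A. infdist a B = setdist A B}"

definition best_B :: "'a::real_normed_vector set \<Rightarrow> 'a set \<Rightarrow> 'a set" where
  "best_B A B = {b \<in> B. infdist b A = setdist A B}"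

definition gap_vec :: "'a::real_inner set \<Rightarrow> 'a set \<Rightarrow> 'a" where
  "gap_vec A B = metric_proj (closure (minkowski_diff B A)) 0"

definition cosv :: "'a::real_inner \<Rightarrow> 'a \<Rightarrow> real" where
  "cosv u w = inner u w / (norm u * norm w)"

definition aw_exc :: "nat \<Rightarrow> 'a::real_normed_vector set \<Rightarrow> 'a set \<Rightarrow> real" where
  "aw_exc N C D = (if C \<inter> cball 0 (real N) = {} then 0
                   else (SUP c\<in>C \<inter> cball 0 (real N). infdist c D))"

definition aw_dist :: "nat \<Rightarrow> 'a::real_normed_vector set \<Rightarrow> 'a set \<Rightarrow> real" where
  "aw_dist N C D = max (aw_exc N C D) (aw_exc N D C)"

definition aw_conv :: "(nat \<Rightarrow> 'a::real_normed_vector set) \<Rightarrow> 'a set \<Rightarrow> bool" where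
  "aw_conv Cs C \<longleftrightarrow> (\<forall>N. (\<lambda>j. aw_dist N (Cs j) C) \<longlonglongrightarrow> 0)"

definition regular_couple :: "'a::real_inner set \<Rightarrow> 'a set \<Rightarrow> bool" where
  "regular_couple A B \<longleftrightarrow>
     (\<forall>\<epsilon>>0. \<exists>\<delta>>0. \<forall>x. max (infdist x A) (infdist x ((\<lambda>b. b - gap_vec A B) ` B)) \<le> \<delta>
                         \<longrightarrow> infdist x (best_A A B) \<le> \<epsilon>)"

end

theory Submission
  imports Defs
begin

text \<open>
Regularity of \<open>(A, B)\<close> says that points almost in both \<open>A\<close> and \<open>B - v\<close> are near \<open>E\<close>.
Attouch-Wets convergence transfers this, on bounded sets, to the couples \<open>(An n, Bn m)\<close>,
and convexity removes the boundedness: a pair \<open>(u, w) \<in> An n \<times> Bn m\<close> with \<open>w - u\<close> close to \<open>v\<close>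
can be pulled back along segments towards an anchor pair near \<open>(e, e + v)\<close>, \<open>e \<in> E\<close>, without
spoiling \<open>w - u \<approx> v\<close>. Hence points of \<open>An n\<close> at distance \<open>\<ge> 2\<epsilon>\<close> from \<open>E\<close> stay a uniform distance
\<open>\<gamma>\<close> away from \<open>Bn m - v\<close>, which bounds the denominators of both cosines from below.

For the numerator of (i), the variational inequality for \<open>a n = P (An n) (b n)\<close> gives
\<open>\<langle>x n - a n, b n - a n\<rangle> \<le> 0\<close>, so only \<open>\<langle>a n - x n, v\<rangle>\<close> remains. It is controlled because
\<open>\<langle>a - e, v\<rangle> \<le> 0\<close> for \<open>a \<in> A\<close>, \<open>e \<in> E\<close>, and \<open>\<langle>c - x n, v\<rangle> / \<parallel>c - x n\<parallel>\<close> is constant along the segment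
from \<open>x n \<approx> E\<close> to \<open>c \<in> An n\<close>, so it suffices to look at points at a fixed small distance from
\<open>x n\<close>, where \<open>An n\<close> is close to \<open>A\<close>. Part (ii) is the same argument for \<open>B\<close> with \<open>-v\<close>.
\<close>

lemma infdist_lessE:
  assumes "A \<noteq> {}" "infdist x A < r"
  obtains a where "a \<in> A" "dist x a < r"
  using assms by (auto simp: infdist_notempty cINF_less_iff)

lemma infdist_translate_image:
  fixes B :: "'a::real_normed_vector set"
  shows "infdist x ((\<lambda>b. b - v) ` B) = infdist (x + v) B"
  by (simp add: infdist_def image_image dist_norm algebra_simps)

section \<open>Metric projection in Hilbert spaces\<close>

lemma parallelogram_midpoint:
  fixes a b z :: "'a::real_inner"
  shows "norm (a - b)^2 = 2 * norm (z - a)^2 + 2 * norm (z - b)^2 - 4 * norm (z - midpoint a b)^2"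
  unfolding power2_norm_eq_inner midpoint_def
  by (simp add: inner_diff inner_add inner_commute algebra_simps)

lemma convex_midpoint_mem: "convex C \<Longrightarrow> a \<in> C \<Longrightarrow> b \<in> C \<Longrightarrow> midpoint a b \<in> C"
  using convexD_alt[of C a b "1/2"] by (simp add: midpoint_def scaleR_add_right)

lemma minimizing_sequence_Cauchy:
  fixes C :: "'a::real_inner set"
  assumes "convex C" "\<And>n. Y n \<in> C" "\<And>c. c \<in> C \<Longrightarrow> d \<le> norm (z - c)" "0 \<le> d"
    and "(\<lambda>n. norm (z - Y n)) \<longlonglongrightarrow> d"
  shows "Cauchy Y"
proof (rule metric_CauchyI)
  fix e :: real
  assume "e > 0"
  have "(\<lambda>n. norm (z - Y n)^2) \<longlonglongrightarrow> d^2"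
    by (intro tendsto_intros assms(5))
  then have "\<forall>\<^sub>F n in sequentially. norm (z - Y n)^2 < d^2 + e^2 / 4"
    using \<open>e > 0\<close> by (intro order_tendstoD(2)) auto
  then obtain M where M: "\<And>n. n \<ge> M \<Longrightarrow> norm (z - Y n)^2 < d^2 + e^2 / 4"
    by (auto simp: eventually_sequentially)
  have "dist (Y m) (Y n) < e" if "m \<ge> M" "n \<ge> M" for m n
  proof -
    have "d \<le> norm (z - midpoint (Y m) (Y n))"
      by (intro assms(3) convex_midpoint_mem assms(1,2))
    then have "d^2 \<le> norm (z - midpoint (Y m) (Y n))^2"
      using assms(4) by (rule power_mono)
    then have "norm (Y m - Y n)^2 < e^2"
      using parallelogram_midpoint[of "Y m" "Y n" z] M[OF that(1)] M[OF that(2)] by linarith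
    then show ?thesis
      using \<open>e > 0\<close> by (simp add: dist_norm power_less_imp_less_base)
  qed
  then show "\<exists>M. \<forall>m\<ge>M. \<forall>n\<ge>M. dist (Y m) (Y n) < e"
    by blast
qed

lemma nearest_point_exists:
  fixes C :: "'a::{real_inner,complete_space} set"
  assumes "closed C" "convex C" "C \<noteq> {}"
  obtains y where "y \<in> C" "\<And>c. c \<in> C \<Longrightarrow> norm (z - y) \<le> norm (z - c)"
proof -
  define d where "d = infdist z C"
  have d_le: "d \<le> norm (z - c)" if "c \<in> C" for c
    using infdist_le[OF that, of z] by (simp add: d_def dist_norm)
  have "\<exists>y\<in>C. norm (z - y) < d + 1 / Suc n" for n
    by (rule infdist_lessE[OF assms(3), of z "d + 1 / Suc n"]) (auto simp: d_def dist_norm)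
  then obtain Y where Y: "\<And>n. Y n \<in> C" "\<And>n. norm (z - Y n) < d + 1 / Suc n"
    by metis
  have "\<forall>\<^sub>F n in sequentially. d \<le> norm (z - Y n)"
    by (simp add: d_le Y(1))
  moreover have "\<forall>\<^sub>F n in sequentially. norm (z - Y n) \<le> d + 1 / Suc n"
    using Y(2) by (simp add: less_imp_le)
  moreover have "(\<lambda>n. d + 1 / Suc n) \<longlonglongrightarrow> d"
    using tendsto_add[OF tendsto_const LIMSEQ_Suc[OF lim_inverse_n'], of d] by simp
  ultimately have lim: "(\<lambda>n. norm (z - Y n)) \<longlonglongrightarrow> d"
    by (rule tendsto_sandwich[OF _ _ tendsto_const])
  have "0 \<le> d"
    by (simp add: d_def infdist_nonneg)
  then have "Cauchy Y"
    using minimizing_sequence_Cauchy[OF assms(2) Y(1) d_le _ lim] by blast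
  then obtain y where y: "Y \<longlonglongrightarrow> y"
    using convergent_eq_Cauchy by blast
  have "y \<in> C"
    using closed_sequentially[OF assms(1)] Y(1) y by blast
  moreover have "norm (z - y) = d"
    using LIMSEQ_unique[OF tendsto_norm[OF tendsto_diff[OF tendsto_const y]] lim] .
  ultimately show thesis
    using that d_le by auto
qed

lemma nearest_point_unique:
  fixes C :: "'a::real_inner set"
  assumes "convex C" "y1 \<in> C" "y2 \<in> C"
    and "\<And>c. c \<in> C \<Longrightarrow> norm (z - y1) \<le> norm (z - c)"
    and "\<And>c. c \<in> C \<Longrightarrow> norm (z - y2) \<le> norm (z - c)"
  shows "y1 = y2"
proof -
  have "norm (z - y1) = norm (z - y2)"
    using assms by (meson antisym)
  then have "norm (z - y1)^2 = norm (z - y2)^2"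
    by simp
  moreover have "norm (z - y1) \<le> norm (z - midpoint y1 y2)"
    by (intro assms(4) convex_midpoint_mem assms(1-3))
  then have "norm (z - y1)^2 \<le> norm (z - midpoint y1 y2)^2"
    by (simp add: power_mono)
  ultimately have "norm (y1 - y2)^2 \<le> 0"
    using parallelogram_midpoint[of y1 y2 z] by linarith
  then show ?thesis
    by simp
qed

lemma metric_proj_eqI:
  assumes "convex C" "y \<in> C" "\<And>c. c \<in> C \<Longrightarrow> norm (z - y) \<le> norm (z - c)"
  shows "metric_proj C z = y"
  unfolding metric_proj_def
  using assms nearest_point_unique[OF assms(1)] by (intro the_equality) blast+

context
  fixes C :: "'a::{real_inner,complete_space} set"
  assumes closed: "closed C" and convex: "convex C" and nonempty: "C \<noteq> {}"
begin

lemma metric_proj_mem: "metric_proj C z \<in> C"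
  and metric_proj_le: "c \<in> C \<Longrightarrow> norm (z - metric_proj C z) \<le> norm (z - c)"
proof -
  obtain y where "y \<in> C" "\<And>c. c \<in> C \<Longrightarrow> norm (z - y) \<le> norm (z - c)"
    using nearest_point_exists[OF closed convex nonempty] by metis
  moreover have "metric_proj C z = y"
    using metric_proj_eqI[OF convex] calculation by blast
  ultimately show "metric_proj C z \<in> C" "c \<in> C \<Longrightarrow> norm (z - metric_proj C z) \<le> norm (z - c)"
    by auto
qed

lemma metric_proj_inner_le:
  assumes "c \<in> C"
  shows "inner (c - metric_proj C z) (z - metric_proj C z) \<le> 0"
proof (rule ccontr)
  define y where "y = metric_proj C z"
  have y_le: "\<And>c. c \<in> C \<Longrightarrow> norm (z - y) \<le> norm (z - c)"
    by (simp add: y_def metric_proj_le)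
  define p where "p = inner (c - y) (z - y)"
  define q where "q = norm (c - y)^2"
  assume "\<not> ?thesis"
  then have "p > 0"
    by (simp add: p_def y_def)
  define t where "t = p / (p + q)"
  have "q \<ge> 0"
    by (simp add: q_def)
  then have t: "0 < t" "t \<le> 1" "t * q \<le> p"
    using \<open>p > 0\<close> by (auto simp: t_def field_simps)
  have "norm (z - ((1 - t) *\<^sub>R y + t *\<^sub>R c))^2 = norm (z - y)^2 - t * (2 * p - t * q)"
    unfolding p_def q_def power2_norm_eq_inner
    by (simp add: inner_diff inner_add inner_commute algebra_simps)
  also have "\<dots> < norm (z - y)^2"
    using t \<open>p > 0\<close> by (simp add: mult_pos_pos)
  finally have "norm (z - ((1 - t) *\<^sub>R y + t *\<^sub>R c)) < norm (z - y)"
    using power_less_imp_less_base by fastforce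
  moreover have "(1 - t) *\<^sub>R y + t *\<^sub>R c \<in> C"
    using convexD_alt[OF convex metric_proj_mem assms] t by (simp add: y_def)
  ultimately show False
    using y_le leD by blast
qed

lemma infdist_eq_norm_metric_proj: "infdist z C = norm (z - metric_proj C z)"
proof (rule antisym)
  show "infdist z C \<le> norm (z - metric_proj C z)"
    using infdist_le[OF metric_proj_mem] by (simp add: dist_norm)
  show "norm (z - metric_proj C z) \<le> infdist z C"
    unfolding infdist_notempty[OF nonempty]
    by (rule cINF_greatest[OF nonempty]) (simp add: dist_norm metric_proj_le)
qed

end

lemma cosv_le_of_inner_le:
  fixes p q :: "'a::real_inner"
  assumes "inner p q \<le> \<delta> * \<gamma> * norm p" "\<gamma> \<le> norm q" "0 < \<gamma>" "0 \<le> \<delta>"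
  shows "cosv p q \<le> \<delta>"
proof (cases "p = 0")
  case True
  then show ?thesis
    using assms(4) by (simp add: cosv_def)
next
  case False
  then have "norm p * norm q > 0"
    using assms(2,3) by (intro mult_pos_pos) auto
  moreover have "\<delta> * \<gamma> * norm p \<le> \<delta> * (norm p * norm q)"
    using mult_left_mono[OF assms(2), of "\<delta> * norm p"] assms(4) by (simp add: algebra_simps)
  ultimately show ?thesis
    using assms(1) by (simp add: cosv_def pos_divide_le_eq)
qed

lemma cosv_metric_proj_le:
  fixes C :: "'a::{real_inner,complete_space} set"
  assumes "closed C" "convex C" "C \<noteq> {}" "p \<in> C" "q = metric_proj C c"
    and "inner (q - p) w \<le> \<delta> * \<gamma> * norm (q - p)" "\<gamma> \<le> norm (c - q - w)" "0 < \<gamma>" "0 \<le> \<delta>"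
  shows "cosv (p - q) (c - q - w) \<le> \<delta>"
proof (rule cosv_le_of_inner_le[OF _ assms(7-9)])
  have "inner (p - q) (c - q) \<le> 0"
    using metric_proj_inner_le[OF assms(1-4)] assms(5) by simp
  moreover have "inner (p - q) (c - q - w) = inner (p - q) (c - q) + inner (q - p) w"
    by (simp add: inner_diff_left inner_diff_right)
  ultimately show "inner (p - q) (c - q - w) \<le> \<delta> * \<gamma> * norm (p - q)"
    using assms(6) by (simp add: norm_minus_commute)
qed

section \<open>The gap vector\<close>

locale convex_couple =
  fixes A B :: "'a::{real_inner,complete_space} set"
  assumes closed_A: "closed A" and convex_A: "convex A" and nonempty_A: "A \<noteq> {}"
    and closed_B: "closed B" and convex_B: "convex B" and nonempty_B: "B \<noteq> {}"
begin

lemma diff_mem_closure_minkowski_diff: "a \<in> A \<Longrightarrow> b \<in> B \<Longrightarrow> b - a \<in> closure (minkowski_diff B A)"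
  unfolding minkowski_diff_def by (rule closure_subset[THEN subsetD]) blast

lemma convex_closure_minkowski_diff: "convex (closure (minkowski_diff B A))"
proof -
  have "minkowski_diff B A = (\<Union>b\<in>B. \<Union>a\<in>A. {b - a})"
    unfolding minkowski_diff_def by auto
  then show ?thesis
    using convex_closure[OF convex_differences[OF convex_B convex_A]] by simp
qed

lemma closure_minkowski_diff_nonempty: "closure (minkowski_diff B A) \<noteq> {}"
proof -
  obtain a b where "a \<in> A" "b \<in> B"
    using nonempty_A nonempty_B by blast
  then show ?thesis
    using diff_mem_closure_minkowski_diff by (metis empty_iff)
qed

lemma gap_vec_mem: "gap_vec A B \<in> closure (minkowski_diff B A)"
  unfolding gap_vec_def
  by (rule metric_proj_mem[OF closed_closure convex_closure_minkowski_diff closure_minkowski_diff_nonempty])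

lemma inner_diff_gap_vec_ge:
  assumes "k \<in> closure (minkowski_diff B A)"
  shows "0 \<le> inner (k - gap_vec A B) (gap_vec A B)"
  using metric_proj_inner_le[OF closed_closure convex_closure_minkowski_diff
      closure_minkowski_diff_nonempty assms, of 0]
  by (simp add: gap_vec_def inner_minus_right)

lemma norm_diff_gap_vec_le:
  assumes "k \<in> closure (minkowski_diff B A)"
  shows "norm (k - gap_vec A B)^2 \<le> norm k^2 - norm (gap_vec A B)^2"
proof -
  have "norm (k - gap_vec A B)^2 = norm k^2 - norm (gap_vec A B)^2 - 2 * inner (k - gap_vec A B) (gap_vec A B)"
    unfolding power2_norm_eq_inner by (simp add: inner_diff inner_commute algebra_simps)
  then show ?thesis
    using inner_diff_gap_vec_ge[OF assms] by linarith
qed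

lemma setdist_le_norm_gap_vec: "setdist A B \<le> norm (gap_vec A B)"
proof -
  have "minkowski_diff B A \<subseteq> {k. setdist A B \<le> norm k}"
  proof (clarsimp simp: minkowski_diff_def)
    fix a b
    assume "a \<in> A" "b \<in> B"
    then show "setdist A B \<le> norm (b - a)"
      using setdist_le_dist[of a A b B] by (simp add: dist_norm norm_minus_commute)
  qed
  then have "closure (minkowski_diff B A) \<subseteq> {k. setdist A B \<le> norm k}"
    using closure_minimal closed_Collect_le[OF continuous_on_const continuous_on_norm_id] by blast
  then show ?thesis
    using gap_vec_mem by blast
qed

lemma best_A_add_gap_vec_mem:
  assumes "e \<in> best_A A B"
  shows "e + gap_vec A B \<in> B"
proof -
  define b where "b = metric_proj B e"
  have "e \<in> A" "infdist e B = setdist A B"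
    using assms by (auto simp: best_A_def)
  then have "norm (b - e) \<le> norm (gap_vec A B)"
    using setdist_le_norm_gap_vec infdist_eq_norm_metric_proj[OF closed_B convex_B nonempty_B, of e]
    by (simp add: b_def norm_minus_commute)
  moreover have "b \<in> B"
    unfolding b_def by (rule metric_proj_mem[OF closed_B convex_B nonempty_B])
  ultimately have "norm (b - e - gap_vec A B)^2 \<le> 0"
    using norm_diff_gap_vec_le[OF diff_mem_closure_minkowski_diff[OF \<open>e \<in> A\<close>]]
    by (smt (verit) norm_ge_zero power_mono)
  then show ?thesis
    using \<open>b \<in> B\<close> by (simp add: algebra_simps)
qed

lemma best_B_diff_gap_vec_mem:
  assumes "f \<in> best_B A B"
  shows "f - gap_vec A B \<in> A"
proof -
  define a where "a = metric_proj A f"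
  have "f \<in> B" "infdist f A = setdist A B"
    using assms by (auto simp: best_B_def)
  then have "norm (f - a) \<le> norm (gap_vec A B)"
    using setdist_le_norm_gap_vec infdist_eq_norm_metric_proj[OF closed_A convex_A nonempty_A, of f]
    by (simp add: a_def)
  moreover have "a \<in> A"
    unfolding a_def by (rule metric_proj_mem[OF closed_A convex_A nonempty_A])
  ultimately have "norm (f - a - gap_vec A B)^2 \<le> 0"
    using norm_diff_gap_vec_le[OF diff_mem_closure_minkowski_diff[OF _ \<open>f \<in> B\<close>]]
    by (smt (verit) norm_ge_zero power_mono)
  then show ?thesis
    using \<open>a \<in> A\<close> by (simp add: algebra_simps)
qed

lemma inner_best_A_gap_vec_le:
  assumes "a \<in> A" "e \<in> best_A A B"
  shows "inner (a - e) (gap_vec A B) \<le> 0"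
  using inner_diff_gap_vec_ge[OF diff_mem_closure_minkowski_diff[OF assms(1) best_A_add_gap_vec_mem[OF assms(2)]]]
  by (simp add: inner_diff_left)

lemma inner_best_B_gap_vec_ge:
  assumes "b \<in> B" "f \<in> best_B A B"
  shows "0 \<le> inner (b - f) (gap_vec A B)"
  using inner_diff_gap_vec_ge[OF diff_mem_closure_minkowski_diff[OF best_B_diff_gap_vec_mem[OF assms(2)] assms(1)]]
  by (simp add: inner_diff_left)

end

section \<open>Attouch-Wets convergence\<close>

lemma infdist_le_aw_exc:
  fixes C D :: "'a::real_normed_vector set"
  assumes "D \<noteq> {}" "z \<in> C" "norm z \<le> real N"
  shows "infdist z D \<le> aw_exc N C D"
proof -
  obtain d where "d \<in> D"
    using assms(1) by blast
  have "infdist c D \<le> real N + norm d" if "c \<in> C \<inter> cball 0 (real N)" for c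
    using that infdist_le[OF \<open>d \<in> D\<close>, of c] norm_triangle_ineq4[of c d]
    by (simp add: dist_norm)
  then have "bdd_above ((\<lambda>c. infdist c D) ` (C \<inter> cball 0 (real N)))"
    by (rule bdd_aboveI2)
  then have "infdist z D \<le> (SUP c\<in>C \<inter> cball 0 (real N). infdist c D)"
    using assms(2,3) by (intro cSUP_upper) auto
  then show ?thesis
    using assms(2,3) by (auto simp: aw_exc_def)
qed

lemma eventually_aw_dist_less:
  assumes "aw_conv Cs C" "\<eta> > 0"
  shows "\<forall>\<^sub>F j in sequentially. aw_dist N (Cs j) C < \<eta>"
  using assms(1) order_tendstoD(2)[OF _ assms(2)] unfolding aw_conv_def by blast

lemma aw_conv_eventually_close_to_limit:
  fixes Cs :: "nat \<Rightarrow> 'a::real_normed_vector set"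
  assumes "aw_conv Cs C" "C \<noteq> {}" "\<eta> > 0"
  shows "\<forall>\<^sub>F j in sequentially. \<forall>z\<in>Cs j. norm z \<le> R \<longrightarrow> infdist z C < \<eta>"
proof -
  obtain N :: nat where "R \<le> N"
    using real_arch_simple by blast
  show ?thesis
  proof (rule eventually_mono[OF eventually_aw_dist_less[OF assms(1,3), of N]], intro ballI impI)
    fix j z
    assume "aw_dist N (Cs j) C < \<eta>" "z \<in> Cs j" "norm z \<le> R"
    then show "infdist z C < \<eta>"
      using infdist_le_aw_exc[OF assms(2), of z "Cs j" N] \<open>R \<le> N\<close> by (simp add: aw_dist_def)
  qed
qed

lemma aw_conv_eventually_near_point:
  fixes Cs :: "nat \<Rightarrow> 'a::real_normed_vector set"
  assumes "aw_conv Cs C" "\<And>j. Cs j \<noteq> {}" "z \<in> C" "\<eta> > 0"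
  shows "\<forall>\<^sub>F j in sequentially. \<exists>c\<in>Cs j. dist z c < \<eta>"
proof -
  obtain N :: nat where "norm z \<le> N"
    using real_arch_simple by blast
  show ?thesis
  proof (rule eventually_mono[OF eventually_aw_dist_less[OF assms(1,4), of N]])
    fix j
    assume "aw_dist N (Cs j) C < \<eta>"
    then have "infdist z (Cs j) < \<eta>"
      using infdist_le_aw_exc[OF assms(2)[of j] assms(3) \<open>norm z \<le> N\<close>] by (simp add: aw_dist_def)
    then show "\<exists>c\<in>Cs j. dist z c < \<eta>"
      using infdist_lessE[OF assms(2)] by blast
  qed
qed

section \<open>Segments in convex sets\<close>

lemma scale_to_norm_min:
  fixes d :: "'a::real_normed_vector"
  assumes "0 \<le> r"
  obtains t where "0 \<le> t" "t \<le> 1" "norm (t *\<^sub>R d) = min r (norm d)" "norm d \<le> r \<Longrightarrow> t = 1"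
proof (cases "norm d \<le> r")
  case True
  then show thesis
    using that[of 1] by simp
next
  case False
  then have "0 < norm d" "r < norm d"
    using assms by auto
  then show thesis
    using that[of "r / norm d"] assms by (simp add: divide_le_eq_1)
qed

lemma convex_pair_truncation:
  fixes v :: "'a::real_normed_vector"
  assumes "convex C" "convex D" "a0 \<in> C" "b0 \<in> D" "u \<in> C" "w \<in> D" "0 \<le> r"
    and "norm (b0 - a0 - v) \<le> s" "norm (w - u - v) \<le> s"
  obtains p c where "p \<in> C" "c \<in> D" "norm (c - p - v) \<le> s"
    "norm (p - a0) = min r (norm (u - a0))" "norm (u - a0) \<le> r \<Longrightarrow> p = u"
proof -
  obtain t where t: "0 \<le> t" "t \<le> 1" "norm (t *\<^sub>R (u - a0)) = min r (norm (u - a0))"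
    "norm (u - a0) \<le> r \<Longrightarrow> t = 1"
    using scale_to_norm_min[OF assms(7), where d = "u - a0"] by metis
  define p where "p = (1 - t) *\<^sub>R a0 + t *\<^sub>R u"
  define c where "c = (1 - t) *\<^sub>R b0 + t *\<^sub>R w"
  have "p \<in> C" "c \<in> D"
    unfolding p_def c_def using convexD_alt t(1,2) assms(1-6) by blast+
  have "c - p - v = (1 - t) *\<^sub>R (b0 - a0 - v) + t *\<^sub>R (w - u - v)"
    by (simp add: p_def c_def algebra_simps)
  then have "norm (c - p - v) \<le> (1 - t) * norm (b0 - a0 - v) + t * norm (w - u - v)"
    using norm_triangle_ineq[of "(1 - t) *\<^sub>R (b0 - a0 - v)" "t *\<^sub>R (w - u - v)"] t(1,2) by simp
  also have "\<dots> \<le> (1 - t) * s + t * s"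
    using t(1,2) assms(8,9) by (intro add_mono mult_left_mono) auto
  finally have "norm (c - p - v) \<le> s"
    by (simp add: algebra_simps)
  moreover have "p - a0 = t *\<^sub>R (u - a0)"
    by (simp add: p_def algebra_simps)
  ultimately show thesis
    using that \<open>p \<in> C\<close> \<open>c \<in> D\<close> t(3,4) by (simp add: p_def)
qed

lemma inner_le_norm_of_sphere_bound:
  fixes S :: "'a::real_inner set"
  assumes "convex S" "x \<in> S" "c \<in> S" "0 < \<rho>" "\<rho> \<le> norm (c - x)"
    and "\<And>z. z \<in> S \<Longrightarrow> norm (z - x) = \<rho> \<Longrightarrow> inner (z - x) w \<le> \<kappa> * \<rho>"
  shows "inner (c - x) w \<le> \<kappa> * norm (c - x)"
proof -
  obtain t where t: "0 \<le> t" "t \<le> 1" "t * norm (c - x) = \<rho>"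
    using scale_to_norm_min[of \<rho> "c - x"] assms(4,5)
    by (metis abs_of_nonneg less_imp_le min.absorb1 norm_scaleR)
  define z where "z = (1 - t) *\<^sub>R x + t *\<^sub>R c"
  have "z \<in> S"
    unfolding z_def by (rule convexD_alt[OF assms(1-3) t(1,2)])
  moreover have "z - x = t *\<^sub>R (c - x)"
    by (simp add: z_def algebra_simps)
  ultimately have "t * inner (c - x) w \<le> t * (\<kappa> * norm (c - x))"
    using assms(6)[of z] t(1,3) by (simp add: mult.left_commute)
  moreover have "t > 0"
    using t(1,3) assms(4) by (cases "t = 0") auto
  ultimately show ?thesis
    by simp
qed

lemma infdist_less_of_near_pair:
  fixes v :: "'a::real_normed_vector"
  assumes "convex C" "convex D" "a0 \<in> C" "b0 \<in> D" "norm (b0 - a0 - v) \<le> \<beta>" "dist e0 a0 < 1"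
    and "E \<noteq> {}" "\<And>e. e \<in> E \<Longrightarrow> dist e0 e \<le> \<rho>"
    and near: "\<And>p c. p \<in> C \<Longrightarrow> c \<in> D \<Longrightarrow> norm (p - a0) \<le> \<rho> + 2 \<Longrightarrow> norm (c - p - v) \<le> \<beta>
      \<Longrightarrow> infdist p E < min \<epsilon> 1"
    and "u \<in> C" "w \<in> D" "norm (w - u - v) \<le> \<beta>"
  shows "infdist u E < \<epsilon>"
proof -
  obtain e1 where "e1 \<in> E"
    using assms(7) by blast
  then have "0 \<le> \<rho> + 2"
    using assms(8)[of e1] zero_le_dist[of e0 e1] by linarith
  \<comment> \<open>Pull \<open>(u, w)\<close> back towards the anchor pair \<open>(a0, b0)\<close> into the ball where \<open>near\<close> applies.\<close>
  then obtain p c where pc: "p \<in> C" "c \<in> D" "norm (c - p - v) \<le> \<beta>"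
    "norm (p - a0) = min (\<rho> + 2) (norm (u - a0))" "norm (u - a0) \<le> \<rho> + 2 \<Longrightarrow> p = u"
    using convex_pair_truncation[OF assms(1-4,10,11) _ assms(5,12)] by blast
  then have "infdist p E < min \<epsilon> 1"
    by (intro near) auto
  then obtain e where e: "e \<in> E" "dist p e < min \<epsilon> 1"
    using infdist_lessE[OF assms(7)] by blast
  show ?thesis
  proof (cases "norm (u - a0) \<le> \<rho> + 2")
    case True
    then show ?thesis
      using \<open>infdist p E < min \<epsilon> 1\<close> pc(5) by simp
  next
    case False
    have "norm (p - a0) \<le> dist p e + dist e e0 + dist e0 a0"
      using dist_triangle[of p a0 e] dist_triangle[of e a0 e0] by (simp add: dist_norm)
    also have "\<dots> < \<rho> + 2"
      using e(2) assms(6) assms(8)[OF e(1)] by (simp add: dist_commute)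
    finally show ?thesis
      using False pc(4) by simp
  qed
qed

section \<open>Angles at the projections\<close>

lemma eventually_inner_le_on_ball:
  fixes Cs :: "nat \<Rightarrow> 'a::real_inner set" and x :: "nat \<Rightarrow> 'a"
  assumes "aw_conv Cs C" "C \<noteq> {}" "E \<noteq> {}" "bounded E"
    and "\<And>c e. c \<in> C \<Longrightarrow> e \<in> E \<Longrightarrow> inner (c - e) w \<le> 0"
    and "(\<lambda>n. infdist (x n) E) \<longlonglongrightarrow> 0" "\<eta> > 0"
  shows "\<forall>\<^sub>F n in sequentially. infdist (x n) E < \<eta> \<and>
    (\<forall>z\<in>Cs n. norm (z - x n) \<le> \<rho> \<longrightarrow> inner (z - x n) w \<le> 2 * \<eta> * norm w)"
proof -
  obtain M where M: "\<And>e. e \<in> E \<Longrightarrow> norm e \<le> M"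
    using assms(4) by (auto simp: bounded_iff)
  have "\<forall>\<^sub>F n in sequentially. infdist (x n) E < \<eta>"
    using order_tendstoD(2)[OF assms(6,7)] .
  moreover have "\<forall>\<^sub>F n in sequentially. \<forall>z\<in>Cs n. norm z \<le> M + \<eta> + \<rho> \<longrightarrow> infdist z C < \<eta>"
    by (rule aw_conv_eventually_close_to_limit[OF assms(1,2,7)])
  ultimately show ?thesis
  proof eventually_elim
    case (elim n)
    obtain e where e: "e \<in> E" "dist (x n) e < \<eta>"
      using infdist_lessE[OF assms(3) elim(1)] .
    have "inner (z - x n) w \<le> 2 * \<eta> * norm w" if "z \<in> Cs n" "norm (z - x n) \<le> \<rho>" for z
    proof -
      have "norm z \<le> M + \<eta> + \<rho>"
        using norm_triangle_ineq[of e "x n - e"] norm_triangle_ineq[of "x n" "z - x n"] M[OF e(1)] e(2) that(2)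
        by (simp add: dist_norm)
      then have "infdist z C < \<eta>"
        using elim(2) that(1) by blast
      then obtain c where c: "c \<in> C" "dist z c < \<eta>"
        using infdist_lessE[OF assms(2)] by blast
      \<comment> \<open>Pass from \<open>z\<close> to \<open>c \<in> C\<close> and from \<open>x n\<close> to \<open>e \<in> E\<close>, where the inner product is nonpositive.\<close>
      have "inner (z - c) w \<le> \<eta> * norm w"
        using norm_cauchy_schwarz[of "z - c" w] c(2) mult_right_mono[of "norm (z - c)" \<eta> "norm w"]
        by (simp add: dist_norm)
      moreover have "inner (e - x n) w \<le> \<eta> * norm w"
        using norm_cauchy_schwarz[of "e - x n" w] e(2) mult_right_mono[of "norm (e - x n)" \<eta> "norm w"]
        by (simp add: dist_norm norm_minus_commute)
      moreover have "inner (z - x n) w = inner (z - c) w + inner (c - e) w + inner (e - x n) w"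
        by (simp add: inner_diff_left)
      ultimately show ?thesis
        using assms(5)[OF c(1) e(1)] by linarith
    qed
    then show ?case
      using elim(1) by blast
  qed
qed

lemma eventually_inner_le_norm:
  fixes Cs :: "nat \<Rightarrow> 'a::real_inner set" and x :: "nat \<Rightarrow> 'a"
  assumes "aw_conv Cs C" "C \<noteq> {}" "\<And>n. convex (Cs n)"
    and "E \<noteq> {}" "bounded E" "\<And>c e. c \<in> C \<Longrightarrow> e \<in> E \<Longrightarrow> inner (c - e) w \<le> 0"
    and "\<And>n. x n \<in> Cs n" "(\<lambda>n. infdist (x n) E) \<longlonglongrightarrow> 0"
    and "\<epsilon> > 0" "\<kappa> > 0"
  shows "\<forall>\<^sub>F n in sequentially. \<forall>c\<in>Cs n. \<epsilon> \<le> infdist c E \<longrightarrow> inner (c - x n) w \<le> \<kappa> * norm (c - x n)"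
proof -
  define \<rho> where "\<rho> = \<epsilon> / 2"
  define \<eta> where "\<eta> = min \<rho> (\<kappa> * \<rho> / (2 * norm w + 1))"
  have "\<rho> > 0"
    using assms(9) by (simp add: \<rho>_def)
  moreover have "2 * norm w + 1 > 0"
    using norm_ge_zero[of w] by linarith
  ultimately have "\<eta> > 0" "\<eta> \<le> \<rho>" "\<eta> * (2 * norm w + 1) \<le> \<kappa> * \<rho>"
    using assms(10) by (auto simp: \<eta>_def min_le_iff_disj pos_le_divide_eq[symmetric])
  then have \<eta>: "\<eta> > 0" "\<eta> \<le> \<rho>" "2 * \<eta> * norm w \<le> \<kappa> * \<rho>"
    by (auto simp: algebra_simps)
  have "\<forall>\<^sub>F n in sequentially. infdist (x n) E < \<eta> \<and>
      (\<forall>z\<in>Cs n. norm (z - x n) \<le> \<rho> \<longrightarrow> inner (z - x n) w \<le> 2 * \<eta> * norm w)"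
    by (rule eventually_inner_le_on_ball[OF assms(1,2,4,5) _ assms(8) \<eta>(1)]) (rule assms(6))
  then show ?thesis
  proof eventually_elim
    case (elim n)
    show ?case
    proof (intro ballI impI)
      fix c
      assume "c \<in> Cs n" "\<epsilon> \<le> infdist c E"
      then have "\<rho> \<le> norm (c - x n)"
        using infdist_triangle[of c E "x n"] elim \<eta>(2) by (simp add: \<rho>_def dist_norm)
      then show "inner (c - x n) w \<le> \<kappa> * norm (c - x n)"
      proof (rule inner_le_norm_of_sphere_bound[OF assms(3,7) \<open>c \<in> Cs n\<close> \<open>\<rho> > 0\<close>])
        fix z
        assume "z \<in> Cs n" "norm (z - x n) = \<rho>"
        then show "inner (z - x n) w \<le> \<kappa> * \<rho>"
          using elim \<eta>(3) by force
      qed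
    qed
  qed
qed

lemma eventually_cosv_metric_proj_le:
  fixes Cs :: "nat \<Rightarrow> 'a::{real_inner,complete_space} set" and x :: "nat \<Rightarrow> 'a"
  assumes "aw_conv Cs C" "C \<noteq> {}" "\<And>n. closed (Cs n)" "\<And>n. convex (Cs n)" "\<And>n. Cs n \<noteq> {}"
    and "E \<noteq> {}" "bounded E" "\<And>c e. c \<in> C \<Longrightarrow> e \<in> E \<Longrightarrow> inner (c - e) w \<le> 0"
    and "\<And>n. x n \<in> Cs n" "(\<lambda>n. infdist (x n) E) \<longlonglongrightarrow> 0"
    and "\<epsilon> > 0" "\<gamma> > 0" "\<delta> > 0"
  shows "\<forall>\<^sub>F n in sequentially. \<forall>c. \<epsilon> \<le> infdist (metric_proj (Cs n) c) E \<longrightarrow>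
    \<gamma> \<le> norm (c - metric_proj (Cs n) c - w) \<longrightarrow>
    cosv (x n - metric_proj (Cs n) c) (c - metric_proj (Cs n) c - w) \<le> \<delta>"
proof -
  have "\<forall>\<^sub>F n in sequentially. \<forall>q\<in>Cs n. \<epsilon> \<le> infdist q E \<longrightarrow> inner (q - x n) w \<le> \<delta> * \<gamma> * norm (q - x n)"
    by (rule eventually_inner_le_norm[OF assms(1,2,4,6,7) _ assms(9-11)])
       (use assms(8,12,13) in auto)
  then show ?thesis
  proof (rule eventually_mono, intro allI impI)
    fix n c
    assume "\<forall>q\<in>Cs n. \<epsilon> \<le> infdist q E \<longrightarrow> inner (q - x n) w \<le> \<delta> * \<gamma> * norm (q - x n)"
      "\<epsilon> \<le> infdist (metric_proj (Cs n) c) E" "\<gamma> \<le> norm (c - metric_proj (Cs n) c - w)"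
    then show "cosv (x n - metric_proj (Cs n) c) (c - metric_proj (Cs n) c - w) \<le> \<delta>"
      using metric_proj_mem[OF assms(3-5)] assms(12,13)
      by (intro cosv_metric_proj_le[OF assms(3-5,9) refl]) auto
  qed
qed

section \<open>Separation of the far part of the sets\<close>

context convex_couple
begin

lemma eventually_near_best_A:
  fixes An Bn :: "nat \<Rightarrow> 'a set"
  assumes "regular_couple A B" "aw_conv An A" "aw_conv Bn B" "\<epsilon> > 0"
  obtains \<gamma> where "\<gamma> > 0"
    "\<And>R. \<forall>\<^sub>F n in sequentially. \<forall>m\<ge>n. \<forall>p\<in>An n. \<forall>c\<in>Bn m.
       norm p \<le> R \<longrightarrow> norm (c - p - gap_vec A B) \<le> \<gamma> \<longrightarrow> infdist p (best_A A B) \<le> \<epsilon>"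
proof -
  define v where "v = gap_vec A B"
  obtain \<delta> where "\<delta> > 0" and \<delta>:
    "\<And>z. infdist z A \<le> \<delta> \<Longrightarrow> infdist z ((\<lambda>b. b - v) ` B) \<le> \<delta> \<Longrightarrow> infdist z (best_A A B) \<le> \<epsilon>"
    using assms(1,4) unfolding regular_couple_def v_def by (meson max.boundedI)
  define \<gamma> where "\<gamma> = \<delta> / 2"
  have "\<gamma> > 0"
    using \<open>\<delta> > 0\<close> by (simp add: \<gamma>_def)
  have "\<forall>\<^sub>F n in sequentially. \<forall>m\<ge>n. \<forall>p\<in>An n. \<forall>c\<in>Bn m.
      norm p \<le> R \<longrightarrow> norm (c - p - v) \<le> \<gamma> \<longrightarrow> infdist p (best_A A B) \<le> \<epsilon>" for R
  proof -
    have "\<forall>\<^sub>F n in sequentially. \<forall>p\<in>An n. norm p \<le> R \<longrightarrow> infdist p A < \<gamma>"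
      by (rule aw_conv_eventually_close_to_limit[OF assms(2) nonempty_A \<open>\<gamma> > 0\<close>])
    moreover have "\<forall>\<^sub>F m in sequentially. \<forall>c\<in>Bn m. norm c \<le> R + norm v + \<gamma> \<longrightarrow> infdist c B < \<gamma>"
      by (rule aw_conv_eventually_close_to_limit[OF assms(3) nonempty_B \<open>\<gamma> > 0\<close>])
    then have "\<forall>\<^sub>F n in sequentially. \<forall>m\<ge>n. \<forall>c\<in>Bn m. norm c \<le> R + norm v + \<gamma> \<longrightarrow> infdist c B < \<gamma>"
      by (rule eventually_all_ge_at_top)
    ultimately show ?thesis
    proof eventually_elim
      case (elim n)
      show ?case
      proof (intro allI ballI impI)
        fix m p c
        assume "n \<le> m" "p \<in> An n" "c \<in> Bn m" "norm p \<le> R" "norm (c - p - v) \<le> \<gamma>"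
        have "norm c \<le> norm p + norm v + norm (c - p - v)"
          using norm_triangle_ineq[of "p + v" "c - p - v"] norm_triangle_ineq[of p v] by simp
        then have "infdist c B < \<gamma>"
          using elim(2) \<open>n \<le> m\<close> \<open>c \<in> Bn m\<close> \<open>norm p \<le> R\<close> \<open>norm (c - p - v) \<le> \<gamma>\<close> by fastforce
        then have "infdist p ((\<lambda>b. b - v) ` B) \<le> \<delta>"
          using infdist_triangle[of "p + v" B c] \<open>norm (c - p - v) \<le> \<gamma>\<close>
          by (simp add: infdist_translate_image dist_norm norm_minus_commute \<gamma>_def algebra_simps)
        moreover have "infdist p A \<le> \<delta>"
          using elim(1) \<open>p \<in> An n\<close> \<open>norm p \<le> R\<close> \<open>\<delta> > 0\<close> by (fastforce simp: \<gamma>_def)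
        ultimately show "infdist p (best_A A B) \<le> \<epsilon>"
          by (rule \<delta>[rotated])
      qed
    qed
  qed
  then show thesis
    using that \<open>\<gamma> > 0\<close> by (simp add: v_def)
qed

lemma eventually_separated_from_best_A:
  fixes An Bn :: "nat \<Rightarrow> 'a set"
  assumes "regular_couple A B" "best_A A B \<noteq> {}" "bounded (best_A A B)"
    and "aw_conv An A" "aw_conv Bn B"
    and "\<And>n. convex (An n)" "\<And>n. An n \<noteq> {}" "\<And>n. convex (Bn n)" "\<And>n. Bn n \<noteq> {}"
    and "\<epsilon> > 0"
  obtains \<gamma> where "\<gamma> > 0"
    "\<forall>\<^sub>F n in sequentially. \<forall>m\<ge>n. \<forall>u\<in>An n. \<forall>w\<in>Bn m.
       \<epsilon> \<le> infdist u (best_A A B) \<longrightarrow> \<gamma> \<le> norm (w - u - gap_vec A B)"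
proof -
  have "min \<epsilon> 1 / 2 > 0"
    using assms(10) by simp
  then obtain \<beta> where "\<beta> > 0" and near_E: "\<And>R. \<forall>\<^sub>F n in sequentially. \<forall>m\<ge>n. \<forall>p\<in>An n. \<forall>c\<in>Bn m.
      norm p \<le> R \<longrightarrow> norm (c - p - gap_vec A B) \<le> \<beta> \<longrightarrow> infdist p (best_A A B) \<le> min \<epsilon> 1 / 2"
    using eventually_near_best_A[OF assms(1,4,5)] by blast
  define E where "E = best_A A B"
  define v where "v = gap_vec A B"
  define \<gamma> where "\<gamma> = min 1 \<beta> / 2"
  have \<gamma>: "\<gamma> > 0" "\<gamma> < 1" "2 * \<gamma> \<le> \<beta>"
    using \<open>\<beta> > 0\<close> by (auto simp: \<gamma>_def)
  have "E \<noteq> {}"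
    using assms(2) by (simp add: E_def)
  then obtain e0 where "e0 \<in> E"
    by blast
  then have "e0 \<in> A" "e0 + v \<in> B"
    using best_A_add_gap_vec_mem by (auto simp: E_def v_def best_A_def)
  obtain \<rho> where \<rho>: "\<And>e. e \<in> E \<Longrightarrow> dist e0 e \<le> \<rho>"
    using assms(3) bounded_any_center[of E e0] by (auto simp: E_def)
  have "\<forall>\<^sub>F n in sequentially. \<exists>a0\<in>An n. dist e0 a0 < \<gamma>"
    by (rule aw_conv_eventually_near_point[OF assms(4,7) \<open>e0 \<in> A\<close> \<gamma>(1)])
  moreover have "\<forall>\<^sub>F n in sequentially. \<forall>m\<ge>n. \<exists>b0\<in>Bn m. dist (e0 + v) b0 < \<gamma>"
    by (rule eventually_all_ge_at_top[OF aw_conv_eventually_near_point[OF assms(5,9) \<open>e0 + v \<in> B\<close> \<gamma>(1)]])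
  moreover note near_E[of "norm e0 + \<rho> + 3", folded E_def v_def]
  ultimately have "\<forall>\<^sub>F n in sequentially. \<forall>m\<ge>n. \<forall>u\<in>An n. \<forall>w\<in>Bn m.
      \<epsilon> \<le> infdist u E \<longrightarrow> \<gamma> \<le> norm (w - u - v)"
  proof eventually_elim
    case (elim n)
    show ?case
    proof (intro allI ballI impI)
      fix m u w
      assume "n \<le> m" "u \<in> An n" "w \<in> Bn m" "\<epsilon> \<le> infdist u E"
      obtain a0 b0 where a0: "a0 \<in> An n" "dist e0 a0 < \<gamma>" and b0: "b0 \<in> Bn m" "dist (e0 + v) b0 < \<gamma>"
        using elim(1,2) \<open>n \<le> m\<close> by blast
      have "norm (b0 - a0 - v) \<le> norm (b0 - (e0 + v)) + norm (e0 - a0)"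
        using norm_triangle_ineq[of "b0 - (e0 + v)" "e0 - a0"] by (simp add: algebra_simps)
      then have "norm (b0 - a0 - v) \<le> \<beta>"
        using a0(2) b0(2) \<gamma>(3) by (simp add: dist_norm norm_minus_commute)
      have near: "infdist p E < min \<epsilon> 1"
        if "p \<in> An n" "c \<in> Bn m" "norm (p - a0) \<le> \<rho> + 2" "norm (c - p - v) \<le> \<beta>" for p c
      proof -
        have "norm p \<le> norm e0 + \<rho> + 3"
          using norm_triangle_ineq[of e0 "a0 - e0"] norm_triangle_ineq[of a0 "p - a0"] a0(2) \<gamma>(2) that(3)
          by (simp add: dist_norm norm_minus_commute)
        then show ?thesis
          using elim(3) \<open>n \<le> m\<close> that \<open>min \<epsilon> 1 / 2 > 0\<close> by fastforce
      qed
      have "infdist u E < \<epsilon>" if "norm (w - u - v) \<le> \<beta>"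
      proof (rule infdist_less_of_near_pair[OF assms(6,8) a0(1) b0(1) \<open>norm (b0 - a0 - v) \<le> \<beta>\<close>])
        show "dist e0 a0 < 1"
          using a0(2) \<gamma>(2) by linarith
      qed (use \<open>E \<noteq> {}\<close> \<rho> near \<open>u \<in> An n\<close> \<open>w \<in> Bn m\<close> that in auto)
      then show "\<gamma> \<le> norm (w - u - v)"
        using \<open>\<epsilon> \<le> infdist u E\<close> \<gamma>(3) \<open>\<gamma> > 0\<close> by fastforce
    qed
  qed
  then show thesis
    using that \<gamma>(1) by (simp add: E_def v_def)
qed

end

theorem lemma4p6:
  fixes A B :: "'a::{real_inner, complete_space} set"
    and An Bn :: "nat \<Rightarrow> 'a set"
    and a x b y :: "nat \<Rightarrow> 'a"
    and \<delta> \<epsilon> :: real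
  assumes "closed A" "convex A" "A \<noteq> {}"
    and "closed B" "convex B" "B \<noteq> {}"
    and "best_A A B \<noteq> {}" "bounded (best_A A B)"
    and "best_B A B \<noteq> {}" "bounded (best_B A B)"
    and "\<And>n. closed (An n) \<and> convex (An n) \<and> An n \<noteq> {}"
    and "\<And>n. closed (Bn n) \<and> convex (Bn n) \<and> Bn n \<noteq> {}"
    and "aw_conv An A" and "aw_conv Bn B"
    and "regular_couple A B"
    and "\<delta> > 0" and "\<epsilon> > 0"
    and "\<And>n. a n \<in> An n \<and> x n \<in> An n"
    and "\<And>n. b n \<in> Bn n \<and> y n \<in> Bn n"
    and "(\<lambda>n. infdist (x n) (best_A A B)) \<longlonglongrightarrow> 0"
    and "(\<lambda>n. infdist (y n) (best_B A B)) \<longlonglongrightarrow> 0"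
  shows "\<exists>n2. \<forall>n\<ge>n2.
     ((infdist (a n) (best_A A B) \<ge> 2 * \<epsilon> \<and> infdist (b n) (best_B A B) \<ge> 2 * \<epsilon>
        \<and> a n = metric_proj (An n) (b n))
       \<longrightarrow> cosv (x n - a n) (b n - (a n + gap_vec A B)) \<le> \<delta>)
   \<and> ((infdist (a n) (best_A A B) \<ge> 2 * \<epsilon> \<and> infdist (b (Suc n)) (best_B A B) \<ge> 2 * \<epsilon>
        \<and> b (Suc n) = metric_proj (Bn (Suc n)) (a n))
       \<longrightarrow> cosv (y (Suc n) - b (Suc n)) (a n + gap_vec A B - b (Suc n)) \<le> \<delta>)"
proof -
  interpret convex_couple A B
    using assms(1-6) by unfold_locales
  have An: "\<And>n. closed (An n)" "\<And>n. convex (An n)" "\<And>n. An n \<noteq> {}"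
    and Bn: "\<And>n. closed (Bn n)" "\<And>n. convex (Bn n)" "\<And>n. Bn n \<noteq> {}"
    and "2 * \<epsilon> > 0"
    using assms(11,12,17) by auto
  then obtain \<gamma> where "\<gamma> > 0" and separated: "\<forall>\<^sub>F n in sequentially. \<forall>m\<ge>n. \<forall>u\<in>An n. \<forall>w\<in>Bn m.
      2 * \<epsilon> \<le> infdist u (best_A A B) \<longrightarrow> \<gamma> \<le> norm (w - u - gap_vec A B)"
    using eventually_separated_from_best_A[OF assms(15,7,8,13,14) An(2,3) Bn(2,3)] by blast
  have "\<forall>\<^sub>F n in sequentially. \<forall>c. 2 * \<epsilon> \<le> infdist (metric_proj (An n) c) (best_A A B) \<longrightarrow>
      \<gamma> \<le> norm (c - metric_proj (An n) c - gap_vec A B) \<longrightarrow>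
      cosv (x n - metric_proj (An n) c) (c - metric_proj (An n) c - gap_vec A B) \<le> \<delta>"
    by (rule eventually_cosv_metric_proj_le[OF assms(13) nonempty_A An assms(7,8) inner_best_A_gap_vec_le])
       (use assms(16,18,20) \<open>2 * \<epsilon> > 0\<close> \<open>\<gamma> > 0\<close> in auto)
  moreover have "\<forall>\<^sub>F n in sequentially. \<forall>c. 2 * \<epsilon> \<le> infdist (metric_proj (Bn (Suc n)) c) (best_B A B) \<longrightarrow>
      \<gamma> \<le> norm (c - metric_proj (Bn (Suc n)) c + gap_vec A B) \<longrightarrow>
      cosv (y (Suc n) - metric_proj (Bn (Suc n)) c) (c - metric_proj (Bn (Suc n)) c + gap_vec A B) \<le> \<delta>"
    using eventually_cosv_metric_proj_le[OF assms(14) nonempty_B Bn assms(9,10), of "- gap_vec A B" y]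
      inner_best_B_gap_vec_ge assms(16,19,21) \<open>2 * \<epsilon> > 0\<close> \<open>\<gamma> > 0\<close>
    by (subst eventually_sequentially_Suc) simp
  ultimately show ?thesis
    unfolding eventually_sequentially[symmetric] using separated
  proof eventually_elim
    case (elim n)
    have sep: "\<gamma> \<le> norm (b m - (a n + gap_vec A B))"
      if "n \<le> m" "2 * \<epsilon> \<le> infdist (a n) (best_A A B)" for m
      using elim(3) assms(18,19) that by (simp add: diff_diff_eq)
    show ?case
    proof (intro conjI impI; elim conjE)
      assume "2 * \<epsilon> \<le> infdist (a n) (best_A A B)" "a n = metric_proj (An n) (b n)"
      then show "cosv (x n - a n) (b n - (a n + gap_vec A B)) \<le> \<delta>"
        using elim(1)[rule_format, of "b n"] sep[of n] by (simp add: diff_diff_eq)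
    next
      assume "2 * \<epsilon> \<le> infdist (a n) (best_A A B)" "2 * \<epsilon> \<le> infdist (b (Suc n)) (best_B A B)"
        "b (Suc n) = metric_proj (Bn (Suc n)) (a n)"
      then show "cosv (y (Suc n) - b (Suc n)) (a n + gap_vec A B - b (Suc n)) \<le> \<delta>"
        using elim(2)[rule_format, of "a n"] sep[of "Suc n"] by (simp add: norm_minus_commute algebra_simps)
    qed
  qed
qed

end
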